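(* Let $R$ be a ring and $(P,Q,\psi)$ an $R$-system. (a) The Toeplitz ring $\mathcal{T}_{(P,Q,\psi)}=\bigoplus_{i\in\mathbb{Z}}\mathcal{T}_i$ is semi-saturated. (b) If $(S,T,\sigma,B)$ is any graded covariant representation of $(P,Q,\psi)$, then $B=\bigoplus_{i\in\mathbb{Z}}B_i$ is semi-saturated.
   Context: For additive subsets $X,Y$ of a ring, $XY$ is the additive subgroup generated by products, and $X^n$ similarly. A $\mathbb{Z}$-graded ring $A=\bigoplus_iA_i$ is semi-saturated if $A_n=(A_1)^n$ and $A_{-n}=(A_{-1})^n$ for all $n>0$. An $R$-system is a triple $(P,Q,\psi)$ with $P,Q$ $R$-bimodules and $\psi:P\otimes_RQ\to R$ an $R$-bimodule homomorphism. Put $P^{\otimes0}=Q^{\otimes0}=R$, $Q^{\otimes n}=Q^{\otimes(n-1)}\otimes_RQ$, $P^{\otimes n}=P\otimes_RP^{\otimes(n-1)}$. A covariant representation of $(P,Q,\psi)$ is a tuple $(S,T,\sigma,B)$ with $B$ a ring, $S:P\to B$, $T:Q\to B$ additive maps, $\sigma:R\to B$ a ring homomorphism, with $S(pr)=S(p)\sigma(r)$, $S(rp)=\sigma(r)S(p)$, $T(qr)=T(q)\sigma(r)$, $T(rq)=\sigma(r)T(q)$, $\sigma(\psi(p\otimes q))=S(p)T(q)$; it is graded if $B$ is generated as a ring by $\sigma(R)\cup S(P)\cup T(Q)$ and $B$ carries a $\mathbb{Z}$-grading with $\sigma(R)\subseteq B_0$, $T(Q)\subseteq B_1$, $S(P)\subseteq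 B_{-1}$. The Toeplitz representation $(\iota_P,\iota_Q,\iota_R,\mathcal{T}_{(P,Q,\psi)})$ is the universal covariant representation (every graded covariant representation $(S,T,\sigma,B)$ receives a unique graded ring epimorphism $\eta$ with $\eta\iota_P=S$, $\eta\iota_Q=T$, $\eta\iota_R=\sigma$); its grading is $\mathcal{T}_i$ = additive group generated by elements $\iota_Q^m(q)\iota_P^n(p)$ and $\iota_R(r)\iota_Q^m(q)\iota_P^n(p)$ with $q\in Q^{\otimes m}$, $p\in P^{\otimes n}$, $m-n=i$, where $\iota_Q^m(q_1\otimes\cdots\otimes q_m)=\iota_Q(q_1)\cdots\iota_Q(q_m)$, similarly $\iota_P^n$, and $\iota^0=\iota_R$. *)

theory Defs
  imports Main
begin

text \<open>Rings are associative, not necessarily unital: Isabelle's type class ring.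
  A ring R is represented by a type 'r of class ring, and likewise for the target rings.\<close>

definition bimodule :: "('r::ring \<Rightarrow> 'p::ab_group_add \<Rightarrow> 'p) \<Rightarrow> ('p \<Rightarrow> 'r \<Rightarrow> 'p) \<Rightarrow> bool" where
  "bimodule lact ract \<longleftrightarrow>
     (\<forall>r p p'. lact r (p + p') = lact r p + lact r p') \<and>
     (\<forall>r s p. lact (r + s) p = lact r p + lact s p) \<and>
     (\<forall>r s p. lact (r * s) p = lact r (lact s p)) \<and>
     (\<forall>r p p'. ract (p + p') r = ract p r + ract p' r) \<and>
     (\<forall>r s p. ract p (r + s) = ract p r + ract p s) \<and>
     (\<forall>r s p. ract p (r * s) = ract (ract p r) s) \<and>
     (\<forall>r s p. lact r (ract p s) = ract (lact r p) s)"

text \<open>An R-bimodule homomorphism from the balanced tensor product P \<otimes>_R Q to R is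
  given by (and, by the universal property of the tensor product, the same as) its values
  psi p q = psi(p \<otimes> q) on elementary tensors: a biadditive R-balanced map that is
  left R-linear in p and right R-linear in q.\<close>

definition tensor_bihom ::
  "('r::ring \<Rightarrow> 'p::ab_group_add \<Rightarrow> 'p) \<Rightarrow> ('p \<Rightarrow> 'r \<Rightarrow> 'p) \<Rightarrow>
   ('r \<Rightarrow> 'q::ab_group_add \<Rightarrow> 'q) \<Rightarrow> ('q \<Rightarrow> 'r \<Rightarrow> 'q) \<Rightarrow> ('p \<Rightarrow> 'q \<Rightarrow> 'r) \<Rightarrow> bool" where
  "tensor_bihom lP rP lQ rQ psi \<longleftrightarrow>
     (\<forall>p p' q. psi (p + p') q = psi p q + psi p' q) \<and>
     (\<forall>p q q'. psi p (q + q') = psi p q + psi p q') \<and>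
     (\<forall>p r q. psi (rP p r) q = psi p (lQ r q)) \<and>
     (\<forall>r p q. psi (lP r p) q = r * psi p q) \<and>
     (\<forall>p q r. psi p (rQ q r) = psi p q * r)"

definition R_system ::
  "('r::ring \<Rightarrow> 'p::ab_group_add \<Rightarrow> 'p) \<Rightarrow> ('p \<Rightarrow> 'r \<Rightarrow> 'p) \<Rightarrow>
   ('r \<Rightarrow> 'q::ab_group_add \<Rightarrow> 'q) \<Rightarrow> ('q \<Rightarrow> 'r \<Rightarrow> 'q) \<Rightarrow> ('p \<Rightarrow> 'q \<Rightarrow> 'r) \<Rightarrow> bool" where
  "R_system lP rP lQ rQ psi \<longleftrightarrow>
     bimodule lP rP \<and> bimodule lQ rQ \<and> tensor_bihom lP rP lQ rQ psi"

inductive_set add_span :: "'a::ab_group_add set \<Rightarrow> 'a set" for X where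
  add_span_base: "x \<in> X \<Longrightarrow> x \<in> add_span X"
| add_span_zero: "0 \<in> add_span X"
| add_span_add: "x \<in> add_span X \<Longrightarrow> y \<in> add_span X \<Longrightarrow> x + y \<in> add_span X"
| add_span_neg: "x \<in> add_span X \<Longrightarrow> - x \<in> add_span X"

inductive nprodsp :: "'a::ring set \<Rightarrow> nat \<Rightarrow> 'a \<Rightarrow> bool" for X where
  nprods_one: "x \<in> X \<Longrightarrow> nprodsp X 1 x"
| nprods_step: "nprodsp X n a \<Longrightarrow> x \<in> X \<Longrightarrow> nprodsp X (Suc n) (a * x)"

definition nprods :: "'a::ring set \<Rightarrow> nat \<Rightarrow> 'a set" where
  "nprods X n = {a. nprodsp X n a}"

definition set_power :: "'a::ring set \<Rightarrow> nat \<Rightarrow> 'a set" where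
  "set_power X n = add_span (nprods X n)"

inductive_set ring_span :: "'a::ring set \<Rightarrow> 'a set" for X where
  ring_span_base: "x \<in> X \<Longrightarrow> x \<in> ring_span X"
| ring_span_zero: "0 \<in> ring_span X"
| ring_span_add: "x \<in> ring_span X \<Longrightarrow> y \<in> ring_span X \<Longrightarrow> x + y \<in> ring_span X"
| ring_span_neg: "x \<in> ring_span X \<Longrightarrow> - x \<in> ring_span X"
| ring_span_mult: "x \<in> ring_span X \<Longrightarrow> y \<in> ring_span X \<Longrightarrow> x * y \<in> ring_span X"

text \<open>A Z-grading of the ring (the whole type) 'a: A = \<Oplus>_i A_i.\<close>
definition Z_graded :: "(int \<Rightarrow> 'a::ring set) \<Rightarrow> bool" where
  "Z_graded A \<longleftrightarrow>
     (\<forall>i. 0 \<in> A i \<and> (\<forall>x\<in>A i. \<forall>y\<in>A i. x + y \<in> A i) \<and> (\<forall>x\<in>A i. - x \<in> A i)) \<and>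
     (\<forall>i j. \<forall>x\<in>A i. \<forall>y\<in>A j. x * y \<in> A (i + j)) \<and>
     (\<forall>a. \<exists>f::int \<Rightarrow> 'a. finite {i. f i \<noteq> 0} \<and> (\<forall>i. f i \<in> A i) \<and> a = sum f {i. f i \<noteq> 0}) \<and>
     (\<forall>f::int \<Rightarrow> 'a. finite {i. f i \<noteq> 0} \<and> (\<forall>i. f i \<in> A i) \<and> sum f {i. f i \<noteq> 0} = 0
        \<longrightarrow> (\<forall>i. f i = 0))"

definition semi_saturated :: "(int \<Rightarrow> 'a::ring set) \<Rightarrow> bool" where
  "semi_saturated A \<longleftrightarrow> Z_graded A \<and>
     (\<forall>n::nat. n > 0 \<longrightarrow> A (int n) = set_power (A 1) n \<and> A (- int n) = set_power (A (-1)) n)"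

definition covariant_rep ::
  "('r::ring \<Rightarrow> 'p::ab_group_add \<Rightarrow> 'p) \<Rightarrow> ('p \<Rightarrow> 'r \<Rightarrow> 'p) \<Rightarrow>
   ('r \<Rightarrow> 'q::ab_group_add \<Rightarrow> 'q) \<Rightarrow> ('q \<Rightarrow> 'r \<Rightarrow> 'q) \<Rightarrow> ('p \<Rightarrow> 'q \<Rightarrow> 'r) \<Rightarrow>
   ('p \<Rightarrow> 'b::ring) \<Rightarrow> ('q \<Rightarrow> 'b) \<Rightarrow> ('r \<Rightarrow> 'b) \<Rightarrow> bool" where
  "covariant_rep lP rP lQ rQ psi S T \<sigma> \<longleftrightarrow>
     (\<forall>p p'. S (p + p') = S p + S p') \<and>
     (\<forall>q q'. T (q + q') = T q + T q') \<and>
     (\<forall>r s. \<sigma> (r + s) = \<sigma> r + \<sigma> s) \<and>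
     (\<forall>r s. \<sigma> (r * s) = \<sigma> r * \<sigma> s) \<and>
     (\<forall>p r. S (rP p r) = S p * \<sigma> r) \<and>
     (\<forall>r p. S (lP r p) = \<sigma> r * S p) \<and>
     (\<forall>q r. T (rQ q r) = T q * \<sigma> r) \<and>
     (\<forall>r q. T (lQ r q) = \<sigma> r * T q) \<and>
     (\<forall>p q. \<sigma> (psi p q) = S p * T q)"

text \<open>A graded covariant representation (S,T,\<sigma>,B), with B the whole type 'b and
  the grading B_i = Bg i.\<close>
definition graded_covariant_rep ::
  "('r::ring \<Rightarrow> 'p::ab_group_add \<Rightarrow> 'p) \<Rightarrow> ('p \<Rightarrow> 'r \<Rightarrow> 'p) \<Rightarrow>
   ('r \<Rightarrow> 'q::ab_group_add \<Rightarrow> 'q) \<Rightarrow> ('q \<Rightarrow> 'r \<Rightarrow> 'q) \<Rightarrow> ('p \<Rightarrow> 'q \<Rightarrow> 'r) \<Rightarrow>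
   ('p \<Rightarrow> 'b::ring) \<Rightarrow> ('q \<Rightarrow> 'b) \<Rightarrow> ('r \<Rightarrow> 'b) \<Rightarrow> (int \<Rightarrow> 'b set) \<Rightarrow> bool" where
  "graded_covariant_rep lP rP lQ rQ psi S T \<sigma> Bg \<longleftrightarrow>
     covariant_rep lP rP lQ rQ psi S T \<sigma> \<and>
     ring_span (range \<sigma> \<union> range S \<union> range T) = UNIV \<and>
     Z_graded Bg \<and>
     range \<sigma> \<subseteq> Bg 0 \<and> range T \<subseteq> Bg 1 \<and> range S \<subseteq> Bg (-1)"

text \<open>Images iota^m(Q^{\<otimes>m}) are additively generated by the products
  iota_Q(q_1)...iota_Q(q_m) (for m = 0: iota_R(R)); these generators are used below.\<close>
definition tensor_image :: "('x \<Rightarrow> 'b::ring) \<Rightarrow> ('r \<Rightarrow> 'b) \<Rightarrow> nat \<Rightarrow> 'b set" where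
  "tensor_image \<iota> \<iota>R m = (if m = 0 then range \<iota>R else nprods (range \<iota>) m)"

definition toeplitz_grading ::
  "('p \<Rightarrow> 'b::ring) \<Rightarrow> ('q \<Rightarrow> 'b) \<Rightarrow> ('r \<Rightarrow> 'b) \<Rightarrow> int \<Rightarrow> 'b set" where
  "toeplitz_grading \<iota>P \<iota>Q \<iota>R i = add_span
     ({a * b | a b m n. a \<in> tensor_image \<iota>Q \<iota>R m \<and> b \<in> tensor_image \<iota>P \<iota>R n \<and> int m - int n = i} \<union>
      {\<iota>R r * a * b | r a b m n. a \<in> tensor_image \<iota>Q \<iota>R m \<and> b \<in> tensor_image \<iota>P \<iota>R n \<and> int m - int n = i})"

definition graded_ring_epi :: "('b::ring \<Rightarrow> 'c::ring) \<Rightarrow> (int \<Rightarrow> 'b set) \<Rightarrow> (int \<Rightarrow> 'c set) \<Rightarrow> bool" where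
  "graded_ring_epi \<eta> A B \<longleftrightarrow>
     (\<forall>x y. \<eta> (x + y) = \<eta> x + \<eta> y) \<and> (\<forall>x y. \<eta> (x * y) = \<eta> x * \<eta> y) \<and>
     surj \<eta> \<and> (\<forall>i. \<eta> ` A i \<subseteq> B i)"

definition toeplitz_rep ::
  "'c::ring itself \<Rightarrow>
   ('r::ring \<Rightarrow> 'p::ab_group_add \<Rightarrow> 'p) \<Rightarrow> ('p \<Rightarrow> 'r \<Rightarrow> 'p) \<Rightarrow>
   ('r \<Rightarrow> 'q::ab_group_add \<Rightarrow> 'q) \<Rightarrow> ('q \<Rightarrow> 'r \<Rightarrow> 'q) \<Rightarrow> ('p \<Rightarrow> 'q \<Rightarrow> 'r) \<Rightarrow>
   ('p \<Rightarrow> 'b::ring) \<Rightarrow> ('q \<Rightarrow> 'b) \<Rightarrow> ('r \<Rightarrow> 'b) \<Rightarrow> bool" where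
  "toeplitz_rep _ lP rP lQ rQ psi \<iota>P \<iota>Q \<iota>R \<longleftrightarrow>
     graded_covariant_rep lP rP lQ rQ psi \<iota>P \<iota>Q \<iota>R (toeplitz_grading \<iota>P \<iota>Q \<iota>R) \<and>
     (\<forall>(S :: 'p \<Rightarrow> 'c) T \<sigma> Bg. graded_covariant_rep lP rP lQ rQ psi S T \<sigma> Bg \<longrightarrow>
        (\<exists>!\<eta>. graded_ring_epi \<eta> (toeplitz_grading \<iota>P \<iota>Q \<iota>R) Bg \<and>
              \<eta> \<circ> \<iota>P = S \<and> \<eta> \<circ> \<iota>Q = T \<and> \<eta> \<circ> \<iota>R = \<sigma>))"

end

theory Submission
  imports Defs
begin

text \<open>Let A be a Z-grading of a ring generated by A_{-1} \<union> A_0 \<union> A_1, and put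
  G_0 = A_0, G_n = (A_1)^n, G_{-n} = (A_{-1})^n. Then G_i \<subseteq> A_i, and G_i A_d \<subseteq> G_{i+d}
  for |d| \<le> 1: the only nontrivial case is (A_1)^{n+1} A_{-1} \<subseteq> (A_1)^n, which holds
  because A_1 A_{-1} \<subseteq> A_0 and (A_1)^n A_0 \<subseteq> (A_1)^n. Hence the additive span of all G_i
  is closed under right multiplication by the generators, so it is the whole ring.
  Writing x \<in> A_k as a sum of elements of the G_i, uniqueness of homogeneous
  decompositions forces x \<in> G_k, i.e. A_k = G_k. Both parts of the theorem are instances,
  since the Toeplitz representation is itself a graded covariant representation.\<close>

definition additive_subgroup :: "'a::ab_group_add set \<Rightarrow> bool" where
  "additive_subgroup Z \<longleftrightarrow> 0 \<in> Z \<and> (\<forall>x\<in>Z. \<forall>y\<in>Z. x + y \<in> Z) \<and> (\<forall>x\<in>Z. - x \<in> Z)"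

lemma additive_subgroup_add_span: "additive_subgroup (add_span X)"
  unfolding additive_subgroup_def by (auto intro: add_span.intros)

lemma add_span_minimal:
  assumes "additive_subgroup Z" "X \<subseteq> Z"
  shows "add_span X \<subseteq> Z"
proof
  fix x assume "x \<in> add_span X"
  then show "x \<in> Z"
    by induction (use assms in \<open>auto simp: additive_subgroup_def\<close>)
qed

lemma add_span_mult_right:
  fixes Z :: "'a::ring set"
  assumes "additive_subgroup Z" "\<And>x. x \<in> X \<Longrightarrow> x * y \<in> Z" and "p \<in> add_span X"
  shows "p * y \<in> Z"
  using assms(3)
  by induction (use assms(1,2) in \<open>auto simp: additive_subgroup_def distrib_right\<close>)

lemma ring_span_mono: "X \<subseteq> Y \<Longrightarrow> ring_span X \<subseteq> ring_span Y"
proof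
  fix x assume "X \<subseteq> Y" and "x \<in> ring_span X"
  from this(2) show "x \<in> ring_span Y"
    by induction (use \<open>X \<subseteq> Y\<close> in \<open>auto intro: ring_span.intros\<close>)
qed

text \<open>The induction carries the stronger invariant W y \<subseteq> W, which is what makes the
  case of a product go through.\<close>
lemma ring_span_subset_right_closed:
  fixes W :: "'a::ring set"
  assumes W: "additive_subgroup W" and "X \<subseteq> W" and "\<And>w x. w \<in> W \<Longrightarrow> x \<in> X \<Longrightarrow> w * x \<in> W"
  shows "ring_span X \<subseteq> W"
proof -
  have "y \<in> W \<and> (\<forall>w\<in>W. w * y \<in> W)" if "y \<in> ring_span X" for y
    using that
  proof induction
    case (ring_span_add x y)
    then show ?case using W by (auto simp: additive_subgroup_def distrib_left)
  next
    case (ring_span_neg x)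
    then show ?case using W by (auto simp: additive_subgroup_def)
  next
    case (ring_span_mult x y)
    then show ?case by (metis mult.assoc)
  qed (use assms in \<open>auto simp: additive_subgroup_def\<close>)
  then show ?thesis by blast
qed

lemma sum_over_support:
  assumes "finite F" "{i. f i \<noteq> 0} \<subseteq> F"
  shows "sum f {i. f i \<noteq> 0} = sum f F"
  by (rule sum.mono_neutral_left) (use assms in auto)

lemma nprodsp_1_iff: "nprodsp X 1 x \<longleftrightarrow> x \<in> X"
proof
  assume "nprodsp X 1 x"
  then show "x \<in> X" by (cases rule: nprodsp.cases) (auto elim: nprodsp.cases)
qed (rule nprods_one)

lemma set_power_1: "set_power X 1 = add_span X"
  by (simp only: set_power_def nprods_def nprodsp_1_iff Collect_mem_eq)

lemma nprodsp_SucE: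
  assumes "nprodsp X (Suc n) a" "n \<ge> 1"
  obtains b x where "nprodsp X n b" "x \<in> X" "a = b * x"
  using assms by (cases rule: nprodsp.cases) auto

lemma nprodsp_mult_right:
  assumes "nprodsp X n a" "\<And>x. x \<in> X \<Longrightarrow> x * z \<in> X"
  shows "nprodsp X n (a * z)"
  using assms(1)
proof induction
  case (nprods_one x)
  then show ?case using assms(2) nprodsp.nprods_one by blast
next
  case (nprods_step n a x)
  then show ?case using assms(2) nprodsp.nprods_step[of X n a "x * z"] by (simp add: mult.assoc)
qed

lemma set_power_mem_nprods: "nprodsp X n a \<Longrightarrow> a \<in> set_power X n"
  by (simp add: set_power_def nprods_def add_span_base)

lemma set_power_mult_right_closed:
  assumes "\<And>x. x \<in> X \<Longrightarrow> x * z \<in> X" and "p \<in> set_power X n"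
  shows "p * z \<in> set_power X n"
  using assms(2) unfolding set_power_def
  by (rule add_span_mult_right[OF additive_subgroup_add_span, rotated])
     (use assms(1) in \<open>auto simp: nprods_def intro: add_span_base nprodsp_mult_right\<close>)

lemma set_power_Suc_mult:
  assumes "p \<in> set_power X n" "x \<in> X"
  shows "p * x \<in> set_power X (Suc n)"
  using assms(1) unfolding set_power_def
  by (rule add_span_mult_right[OF additive_subgroup_add_span, rotated])
     (use assms(2) in \<open>auto simp: nprods_def intro: add_span_base nprods_step\<close>)

lemma set_power_Suc_mult_cancel:
  assumes "n \<ge> 1" and "\<And>x. x \<in> X \<Longrightarrow> x * y \<in> W"
    and absorb: "\<And>p w. p \<in> set_power X n \<Longrightarrow> w \<in> W \<Longrightarrow> p * w \<in> set_power X n"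
    and "p \<in> set_power X (Suc n)"
  shows "p * y \<in> set_power X n"
proof -
  have "a * y \<in> set_power X n" if a: "a \<in> nprods X (Suc n)" for a
  proof -
    obtain b x where "nprodsp X n b" "x \<in> X" "a = b * x"
      using a assms(1) by (auto simp: nprods_def elim: nprodsp_SucE)
    then show ?thesis
      using absorb[OF set_power_mem_nprods] assms(2) by (simp add: mult.assoc)
  qed
  moreover have "additive_subgroup (set_power X n)"
    unfolding set_power_def by (rule additive_subgroup_add_span)
  ultimately show ?thesis
    using add_span_mult_right assms(4) unfolding set_power_def[of X "Suc n"] by blast
qed

lemma Z_graded_subgroup: "Z_graded A \<Longrightarrow> additive_subgroup (A i)"
  unfolding Z_graded_def additive_subgroup_def by blast

lemma Z_graded_mult: "Z_graded A \<Longrightarrow> x \<in> A i \<Longrightarrow> y \<in> A j \<Longrightarrow> x * y \<in> A (i + j)"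
  unfolding Z_graded_def by blast

lemma Z_graded_set_power_1: "Z_graded A \<Longrightarrow> set_power (A i) 1 = A i"
  unfolding set_power_1
  by (rule subset_antisym[OF add_span_minimal[OF Z_graded_subgroup]]) (auto intro: add_span_base)

lemma Z_graded_nprods:
  assumes "Z_graded A" "nprodsp (A e) n a"
  shows "a \<in> A (e * int n)"
  using assms(2)
proof induction
  case (nprods_step n a x)
  then have "a * x \<in> A (e * int n + e)" using Z_graded_mult[OF assms(1)] by blast
  then show ?case by (simp add: algebra_simps)
qed simp

lemma Z_graded_set_power: "Z_graded A \<Longrightarrow> set_power (A e) n \<subseteq> A (e * int n)"
  unfolding set_power_def
  by (rule add_span_minimal[OF Z_graded_subgroup]) (auto simp: nprods_def intro: Z_graded_nprods)

lemma add_span_UN_decomposition: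
  assumes G: "\<And>i. additive_subgroup (G i)" and "x \<in> add_span (\<Union>i. G i)"
  shows "\<exists>f. finite {i. f i \<noteq> 0} \<and> (\<forall>i. f i \<in> G i) \<and> x = sum f {i. f i \<noteq> 0}"
  using assms(2)
proof induction
  case (add_span_base x)
  then obtain j where "x \<in> G j" by blast
  define f where "f i = (if i = j then x else 0)" for i
  have supp: "{i. f i \<noteq> 0} \<subseteq> {j}" by (auto simp: f_def)
  then have "finite {i. f i \<noteq> 0}" by (rule finite_subset) simp
  moreover have "x = sum f {i. f i \<noteq> 0}" using sum_over_support[OF _ supp] by (simp add: f_def)
  moreover have "\<forall>i. f i \<in> G i" using \<open>x \<in> G j\<close> G by (auto simp: f_def additive_subgroup_def)
  ultimately show ?case by blast
next
  case add_span_zero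
  show ?case using G by (intro exI[of _ "\<lambda>_. 0"]) (auto simp: additive_subgroup_def)
next
  case (add_span_add x y)
  then obtain f g where f: "finite {i. f i \<noteq> 0}" "\<forall>i. f i \<in> G i" "x = sum f {i. f i \<noteq> 0}"
    and g: "finite {i. g i \<noteq> 0}" "\<forall>i. g i \<in> G i" "y = sum g {i. g i \<noteq> 0}"
    by blast
  let ?F = "{i. f i \<noteq> 0} \<union> {i. g i \<noteq> 0}"
  have "x + y = sum (\<lambda>i. f i + g i) ?F"
    using f g sum_over_support[of ?F f] sum_over_support[of ?F g] by (simp add: sum.distrib)
  also have "\<dots> = sum (\<lambda>i. f i + g i) {i. f i + g i \<noteq> 0}"
    by (rule sum_over_support[symmetric]) (use f g in auto)
  finally have "x + y = sum (\<lambda>i. f i + g i) {i. f i + g i \<noteq> 0}" .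
  moreover have "finite {i. f i + g i \<noteq> 0}"
    by (rule finite_subset[of _ ?F]) (use f g in auto)
  ultimately show ?case
    using f g G by (intro exI[of _ "\<lambda>i. f i + g i"]) (auto simp: additive_subgroup_def)
next
  case (add_span_neg x)
  then obtain f where "finite {i. f i \<noteq> 0}" "\<forall>i. f i \<in> G i" "x = sum f {i. f i \<noteq> 0}"
    by blast
  then show ?case
    using G by (intro exI[of _ "\<lambda>i. - f i"]) (auto simp: additive_subgroup_def sum_negf)
qed

lemma Z_graded_decomposition_unique:
  assumes "Z_graded A" "finite {i. f i \<noteq> 0}" "\<And>i. f i \<in> A i" "sum f {i. f i \<noteq> 0} = 0"
  shows "f i = 0"
proof -
  have "\<forall>f. finite {i. f i \<noteq> 0} \<and> (\<forall>i. f i \<in> A i) \<and> sum f {i. f i \<noteq> 0} = 0 \<longrightarrow> (\<forall>i. f i = 0)"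
    using assms(1) unfolding Z_graded_def by blast
  then show ?thesis using assms(2-4) by blast
qed

lemma Z_graded_component_of_add_span:
  assumes A: "Z_graded A" and G: "\<And>i. additive_subgroup (G i)" "\<And>i. G i \<subseteq> A i"
    and "x \<in> add_span (\<Union>i. G i)" and "x \<in> A k"
  shows "x \<in> G k"
proof -
  obtain f where f: "finite {i. f i \<noteq> 0}" "\<forall>i. f i \<in> G i" "x = sum f {i. f i \<noteq> 0}"
    using add_span_UN_decomposition[OF G(1) assms(4)] by blast
  define g where "g i = f i - (if i = k then x else 0)" for i
  have supp: "{i. g i \<noteq> 0} \<subseteq> insert k {i. f i \<noteq> 0}" by (auto simp: g_def)
  have fin: "finite {i. g i \<noteq> 0}" using finite_subset[OF supp] f(1) by simp
  have "g i \<in> A i" for i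
  proof -
    have "f i \<in> A i" "(if i = k then x else 0) \<in> A i"
      using f(2) G(2) \<open>x \<in> A k\<close> Z_graded_subgroup[OF A, of i] by (auto simp: additive_subgroup_def)
    then show ?thesis
      using Z_graded_subgroup[OF A, of i] unfolding g_def additive_subgroup_def
      by (metis diff_conv_add_uminus)
  qed
  moreover have "sum g {i. g i \<noteq> 0} = 0"
  proof -
    have "sum g {i. g i \<noteq> 0} = sum g (insert k {i. f i \<noteq> 0})"
      using sum_over_support[OF _ supp] f(1) by simp
    also have "\<dots> = sum f (insert k {i. f i \<noteq> 0}) - x"
      using f(1) by (simp add: g_def sum_subtractf)
    also have "sum f (insert k {i. f i \<noteq> 0}) = x"
      using sum_over_support[of "insert k {i. f i \<noteq> 0}" f] f(1,3) by (simp add: subset_insertI)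
    finally show ?thesis by simp
  qed
  ultimately have "g k = 0" using Z_graded_decomposition_unique[OF A fin] by blast
  then have "x = f k" by (simp add: g_def)
  then show ?thesis using f(2) by simp
qed

lemma set_power_mult_degree_zero:
  assumes "Z_graded A" "p \<in> set_power (A e) n" "z \<in> A 0"
  shows "p * z \<in> set_power (A e) n"
proof (rule set_power_mult_right_closed[OF _ assms(2)])
  fix x assume "x \<in> A e"
  from Z_graded_mult[OF assms(1) this assms(3)] show "x * z \<in> A e" by simp
qed

definition power_component :: "(int \<Rightarrow> 'a::ring set) \<Rightarrow> int \<Rightarrow> 'a set" where
  "power_component A i =
     (if i = 0 then A 0 else if 0 < i then set_power (A 1) (nat i) else set_power (A (-1)) (nat (- i)))"

lemma power_component_signed:
  "e \<in> {1, -1} \<Longrightarrow> n \<ge> 1 \<Longrightarrow> power_component A (e * int n) = set_power (A e) n"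
  by (auto simp: power_component_def)

lemma power_component_subset: "Z_graded A \<Longrightarrow> power_component A i \<subseteq> A i"
  using Z_graded_set_power[of A 1 "nat i"] Z_graded_set_power[of A "-1" "nat (- i)"]
  by (auto simp: power_component_def)

lemma power_component_subgroup: "Z_graded A \<Longrightarrow> additive_subgroup (power_component A i)"
  by (simp add: power_component_def set_power_def additive_subgroup_add_span Z_graded_subgroup)

lemma power_component_base: "Z_graded A \<Longrightarrow> d \<in> {-1, 0, 1} \<Longrightarrow> A d \<subseteq> power_component A d"
  using Z_graded_set_power_1[of A 1] Z_graded_set_power_1[of A "-1"]
  by (auto simp add: power_component_def)

lemma power_component_mult:
  assumes A: "Z_graded A" and x: "x \<in> power_component A i" and g: "g \<in> A d" and d: "d \<in> {-1, 0, 1}"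
  shows "x * g \<in> power_component A (i + d)"
proof (cases "i = 0")
  case True
  then have "x * g \<in> A d" using x Z_graded_mult[OF A _ g, of x 0] by (simp add: power_component_def)
  then show ?thesis using power_component_base[OF A d] True by auto
next
  case False
  define e n where "e = sgn i" and "n = nat \<bar>i\<bar>"
  have e: "e \<in> {1, -1}" and n: "n \<ge> 1" and i: "i = e * int n"
    using False by (auto simp: e_def n_def sgn_if)
  have component: "power_component A (e * int m) = set_power (A e) m" if "m \<ge> 1" for m
    using power_component_signed[OF e that] .
  have xp: "x \<in> set_power (A e) n" using x component[OF n] i by simp
  consider "d = 0" | "d = e" | "d = - e" using d e by auto
  then show ?thesis
  proof cases
    case 1
    then show ?thesis using set_power_mult_degree_zero[OF A xp] g i component[OF n] by simp
  next
    case 2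
    have "i + d = e * int (Suc n)" using i 2 by (simp add: algebra_simps)
    then show ?thesis using set_power_Suc_mult[OF xp] g 2 component[of "Suc n"] by simp
  next
    case 3
    have deg0: "y * g \<in> A 0" if "y \<in> A e" for y using Z_graded_mult[OF A that g] 3 by simp
    show ?thesis
    proof (cases "n = 1")
      case True
      then have "x * g \<in> A 0" using deg0 xp Z_graded_set_power_1[OF A] by simp
      moreover have "i + d = 0" using i 3 True by simp
      ultimately show ?thesis by (simp add: power_component_def)
    next
      case False
      then obtain m where m: "n = Suc m" "m \<ge> 1" using n by (cases n) auto
      have "x * g \<in> set_power (A e) m"
        using set_power_Suc_mult_cancel[OF m(2) deg0 set_power_mult_degree_zero[OF A]] xp m by simp
      moreover have "i + d = e * int m" using i 3 m(1) by (simp add: algebra_simps)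
      ultimately show ?thesis using component[OF m(2)] by simp
    qed
  qed
qed

lemma Z_graded_generated_semi_saturated:
  assumes A: "Z_graded A" and gen: "ring_span (A 0 \<union> A 1 \<union> A (-1)) = UNIV"
  shows "semi_saturated A"
proof -
  let ?W = "add_span (\<Union>i. power_component A i)"
  have "ring_span (A 0 \<union> A 1 \<union> A (-1)) \<subseteq> ?W"
  proof (rule ring_span_subset_right_closed[OF additive_subgroup_add_span])
    show "A 0 \<union> A 1 \<union> A (-1) \<subseteq> ?W"
      using power_component_base[OF A] by (blast intro: add_span_base)
    fix w x assume "w \<in> ?W" "x \<in> A 0 \<union> A 1 \<union> A (-1)"
    then obtain d where "x \<in> A d" "d \<in> {-1, 0, 1}" by blast
    then have "v * x \<in> ?W" if "v \<in> power_component A i" for v i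
      using power_component_mult[OF A that] by (blast intro: add_span_base)
    then show "w * x \<in> ?W"
      using add_span_mult_right[OF additive_subgroup_add_span _ \<open>w \<in> ?W\<close>] by blast
  qed
  then have "A k \<subseteq> power_component A k" for k
    using Z_graded_component_of_add_span[OF A power_component_subgroup[OF A] power_component_subset[OF A]] gen
    by blast
  then have eq: "A k = power_component A k" for k using power_component_subset[OF A] by blast
  have "A (e * int n) = set_power (A e) n" if "e \<in> {1, -1}" "n > 0" for e n
    using eq[of "e * int n"] power_component_signed[OF that(1), of n A] that(2) by simp
  from this[of 1] this[of "-1"] show ?thesis
    using A by (simp add: semi_saturated_def)
qed

lemma graded_covariant_rep_semi_saturated:
  assumes "graded_covariant_rep lP rP lQ rQ psi S T \<sigma> Bg"
  shows "semi_saturated Bg"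
proof -
  have A: "Z_graded Bg" and gen: "ring_span (range \<sigma> \<union> range S \<union> range T) = UNIV"
    and "range \<sigma> \<subseteq> Bg 0" "range T \<subseteq> Bg 1" "range S \<subseteq> Bg (-1)"
    using assms unfolding graded_covariant_rep_def by auto
  then have "ring_span (range \<sigma> \<union> range S \<union> range T) \<subseteq> ring_span (Bg 0 \<union> Bg 1 \<union> Bg (-1))"
    by (intro ring_span_mono) auto
  then show ?thesis using Z_graded_generated_semi_saturated[OF A] gen by auto
qed

theorem mainTheorem12:
  fixes lP :: "'r::ring \<Rightarrow> 'p::ab_group_add \<Rightarrow> 'p" and rP :: "'p \<Rightarrow> 'r \<Rightarrow> 'p"
    and lQ :: "'r \<Rightarrow> 'q::ab_group_add \<Rightarrow> 'q" and rQ :: "'q \<Rightarrow> 'r \<Rightarrow> 'q"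
    and psi :: "'p \<Rightarrow> 'q \<Rightarrow> 'r"
    and \<iota>P :: "'p \<Rightarrow> 't::ring" and \<iota>Q :: "'q \<Rightarrow> 't" and \<iota>R :: "'r \<Rightarrow> 't"
    and S :: "'p \<Rightarrow> 'b::ring" and T :: "'q \<Rightarrow> 'b" and \<sigma> :: "'r \<Rightarrow> 'b"
    and Bg :: "int \<Rightarrow> 'b set"
  assumes "R_system lP rP lQ rQ psi"
  shows "(toeplitz_rep TYPE('c::ring) lP rP lQ rQ psi \<iota>P \<iota>Q \<iota>R
            \<longrightarrow> semi_saturated (toeplitz_grading \<iota>P \<iota>Q \<iota>R))
       \<and> (graded_covariant_rep lP rP lQ rQ psi S T \<sigma> Bg \<longrightarrow> semi_saturated Bg)"
  using graded_covariant_rep_semi_saturated[of lP rP lQ rQ psi \<iota>P \<iota>Q \<iota>R]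
    graded_covariant_rep_semi_saturated[of lP rP lQ rQ psi S T \<sigma> Bg]
  unfolding toeplitz_rep_def by blast

end
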